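(* Let $G$ and $H$ be graphs, each with at least $2$ vertices. The lexicographic product $G[H]$ is $1$-perfectly orientable if and only if one of the following holds: (i) $G$ is edgeless and $H$ is $1$-perfectly orientable; (ii) $G$ is $1$-perfectly orientable and $H$ is complete; (iii) every connected component of $G$ is complete and $H$ is a co-bipartite $1$-perfectly orientable graph.
   Context: All graphs are finite and simple. An orientation of a graph $G$ is $1$-perfect if the out-neighborhood of every vertex induces a clique in $G$; $G$ is $1$-perfectly orientable if it admits a $1$-perfect orientation. The lexicographic product $G[H]$ has vertex set $V(G)\times V(H)$, with distinct $(u,v),(u',v')$ adjacent iff either $uu'\in E(G)$, or $u=u'$ and $vv'\in E(H)$. A graph is co-bipartite if its complement is bipartite. *)

theory Defs
  imports Main
begin

type_synonym 'a graph = "'a set \<times> 'a set set"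

definition verts :: "'a graph \<Rightarrow> 'a set" where "verts G = fst G"
definition edges :: "'a graph \<Rightarrow> 'a set set" where "edges G = snd G"

definition graph :: "'a graph \<Rightarrow> bool" where
  "graph G \<longleftrightarrow> finite (verts G) \<and>
     (\<forall>e\<in>edges G. \<exists>u v. e = {u, v} \<and> u \<noteq> v \<and> u \<in> verts G \<and> v \<in> verts G)"

definition adj :: "'a graph \<Rightarrow> 'a \<Rightarrow> 'a \<Rightarrow> bool" where
  "adj G u v \<longleftrightarrow> {u, v} \<in> edges G \<and> u \<noteq> v"

definition clique :: "'a graph \<Rightarrow> 'a set \<Rightarrow> bool" where
  "clique G S \<longleftrightarrow> S \<subseteq> verts G \<and> (\<forall>u\<in>S. \<forall>v\<in>S. u \<noteq> v \<longrightarrow> adj G u v)"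

definition orientation :: "'a graph \<Rightarrow> ('a \<times> 'a) set \<Rightarrow> bool" where
  "orientation G D \<longleftrightarrow>
     (\<forall>(u, v)\<in>D. adj G u v) \<and>
     (\<forall>u v. adj G u v \<longrightarrow> ((u, v) \<in> D \<longleftrightarrow> (v, u) \<notin> D))"

definition out_nbhd :: "('a \<times> 'a) set \<Rightarrow> 'a \<Rightarrow> 'a set" where
  "out_nbhd D u = {v. (u, v) \<in> D}"

definition one_perfect_orientation :: "'a graph \<Rightarrow> ('a \<times> 'a) set \<Rightarrow> bool" where
  "one_perfect_orientation G D \<longleftrightarrow> orientation G D \<and>
     (\<forall>u\<in>verts G. clique G (out_nbhd D u))"

definition one_perfectly_orientable :: "'a graph \<Rightarrow> bool" where
  "one_perfectly_orientable G \<longleftrightarrow> (\<exists>D. one_perfect_orientation G D)"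

definition edgeless :: "'a graph \<Rightarrow> bool" where
  "edgeless G \<longleftrightarrow> edges G = {}"

definition complete :: "'a graph \<Rightarrow> bool" where
  "complete G \<longleftrightarrow> clique G (verts G)"

definition connected_in :: "'a graph \<Rightarrow> 'a \<Rightarrow> 'a \<Rightarrow> bool" where
  "connected_in G u v \<longleftrightarrow> (u, v) \<in> {(x, y). adj G x y}\<^sup>*"

definition components_complete :: "'a graph \<Rightarrow> bool" where
  "components_complete G \<longleftrightarrow>
     (\<forall>u\<in>verts G. \<forall>v\<in>verts G. connected_in G u v \<and> u \<noteq> v \<longrightarrow> adj G u v)"

definition complement :: "'a graph \<Rightarrow> 'a graph" where
  "complement G = (verts G, {{u, v} | u v. u \<in> verts G \<and> v \<in> verts G \<and> u \<noteq> v \<and> \<not> adj G u v})"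

definition bipartite :: "'a graph \<Rightarrow> bool" where
  "bipartite G \<longleftrightarrow> (\<exists>A B. A \<inter> B = {} \<and> A \<union> B = verts G \<and>
     (\<forall>u v. adj G u v \<longrightarrow> (u \<in> A \<and> v \<in> B) \<or> (u \<in> B \<and> v \<in> A)))"

definition co_bipartite :: "'a graph \<Rightarrow> bool" where
  "co_bipartite G \<longleftrightarrow> bipartite (complement G)"

definition lex_product :: "'a graph \<Rightarrow> 'b graph \<Rightarrow> ('a \<times> 'b) graph" where
  "lex_product G H = (verts G \<times> verts H,
     {{(u, v), (u', v')} | u v u' v'. u \<in> verts G \<and> u' \<in> verts G \<and> v \<in> verts H \<and> v' \<in> verts H \<and>
        (adj G u u' \<or> (u = u' \<and> adj H v v'))})"

end

theory Submission imports Defs begin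

text \<open>Sufficiency: orient \<open>G[H]\<close> lexicographically, arcs inside a fibre \<open>{u} \<times> V(H)\<close>
  following an orientation of \<open>H\<close> and arcs between fibres following an orientation of \<open>G\<close>,
  except that an arc between fibres is reversed when its endpoints have second coordinates on
  different sides of a bipartition \<open>A\<close> of the complement of \<open>H\<close>. In case (iii) the
  out-neighbours of \<open>(u, v)\<close> in another fibre then all lie on one side of \<open>A\<close>, i.e. in a clique
  of \<open>H\<close>, and the fibres they lie in are pairwise adjacent because \<open>G\<close> is a disjoint union of
  cliques.

  Necessity: \<open>G\<close> and \<open>H\<close> are induced subgraphs of \<open>G[H]\<close>, and 1-perfect orientability is
  hereditary. If \<open>G\<close> has an edge \<open>uu'\<close> and \<open>H\<close> a non-edge \<open>ab\<close>, every vertex of the fibre of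
  \<open>u'\<close> is an out-neighbour of \<open>(u, a)\<close> or of \<open>(u, b)\<close>, since otherwise it would have the
  non-adjacent \<open>(u, a)\<close>, \<open>(u, b)\<close> as out-neighbours; this splits \<open>H\<close> into two cliques. For an
  induced path \<open>x y z\<close> in \<open>G\<close> the same argument makes each of the pairwise non-adjacent vertices
  \<open>(x, a)\<close>, \<open>(x, b)\<close>, \<open>(z, a)\<close> an out-neighbour of \<open>(y, a)\<close> or \<open>(y, b)\<close>, which is impossible; so
  the components of \<open>G\<close> are complete.\<close>

lemma adj_commute: "adj G u v \<longleftrightarrow> adj G v u"
  by (auto simp: adj_def insert_commute)

lemma adj_irrefl [simp]: "\<not> adj G u u"
  by (simp add: adj_def)

lemma edgeless_iff_no_adj:
  assumes "graph G"
  shows "edgeless G \<longleftrightarrow> (\<forall>u v. \<not> adj G u v)"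
proof
  show "edgeless G \<Longrightarrow> \<forall>u v. \<not> adj G u v" by (simp add: edgeless_def adj_def)
next
  assume no_adj: "\<forall>u v. \<not> adj G u v"
  have "e \<notin> edges G" for e
    using assms no_adj unfolding graph_def adj_def by metis
  then show "edgeless G" unfolding edgeless_def by blast
qed

lemma adj_imp_verts: "graph G \<Longrightarrow> adj G u v \<Longrightarrow> u \<in> verts G \<and> v \<in> verts G"
  unfolding graph_def adj_def by (force simp: doubleton_eq_iff)

lemma verts_lex_product [simp]: "verts (lex_product G H) = verts G \<times> verts H"
  by (simp add: lex_product_def verts_def)

lemma adj_lex_product:
  "adj (lex_product G H) (u, v) (u', v') \<longleftrightarrow>
     u \<in> verts G \<and> u' \<in> verts G \<and> v \<in> verts H \<and> v' \<in> verts H \<and>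
     (adj G u u' \<or> (u = u' \<and> adj H v v'))"
  unfolding adj_def lex_product_def edges_def verts_def
  by (auto simp: doubleton_eq_iff insert_commute adj_def)

lemma graph_lex_product: "graph G \<Longrightarrow> graph H \<Longrightarrow> graph (lex_product G H)"
  unfolding graph_def lex_product_def verts_def edges_def by (auto simp: adj_def)

lemma adj_complement:
  "adj (complement H) v w \<longleftrightarrow> v \<in> verts H \<and> w \<in> verts H \<and> v \<noteq> w \<and> \<not> adj H v w"
  unfolding adj_def complement_def edges_def verts_def
  by (auto simp: doubleton_eq_iff insert_commute adj_def)

lemma verts_complement [simp]: "verts (complement H) = verts H"
  by (simp add: complement_def verts_def)

lemma co_bipartite_iff:
  "co_bipartite H \<longleftrightarrow>
     (\<exists>A. \<forall>v\<in>verts H. \<forall>w\<in>verts H. v \<noteq> w \<and> (v \<in> A \<longleftrightarrow> w \<in> A) \<longrightarrow> adj H v w)"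
proof
  assume "co_bipartite H"
  then obtain A B where "A \<inter> B = {}" "A \<union> B = verts H"
    and "\<forall>v w. adj (complement H) v w \<longrightarrow> (v \<in> A \<and> w \<in> B) \<or> (v \<in> B \<and> w \<in> A)"
    unfolding co_bipartite_def bipartite_def by auto
  then show "\<exists>A. \<forall>v\<in>verts H. \<forall>w\<in>verts H. v \<noteq> w \<and> (v \<in> A \<longleftrightarrow> w \<in> A) \<longrightarrow> adj H v w"
    by (metis adj_complement disjoint_iff)
next
  assume "\<exists>A. \<forall>v\<in>verts H. \<forall>w\<in>verts H. v \<noteq> w \<and> (v \<in> A \<longleftrightarrow> w \<in> A) \<longrightarrow> adj H v w"
  then obtain A where A: "\<forall>v\<in>verts H. \<forall>w\<in>verts H. v \<noteq> w \<and> (v \<in> A \<longleftrightarrow> w \<in> A) \<longrightarrow> adj H v w"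
    by blast
  have "adj (complement H) v w \<Longrightarrow>
      (v \<in> verts H \<inter> A \<and> w \<in> verts H - A) \<or> (v \<in> verts H - A \<and> w \<in> verts H \<inter> A)" for v w
    using A by (auto simp: adj_complement)
  then show "co_bipartite H"
    unfolding co_bipartite_def bipartite_def
    by (intro exI[of _ "verts H \<inter> A"] exI[of _ "verts H - A"]) auto
qed

lemma components_complete_if_adj_trans:
  assumes trans: "\<And>x y z. adj G x y \<Longrightarrow> adj G y z \<Longrightarrow> x \<noteq> z \<Longrightarrow> adj G x z"
  shows "components_complete G"
  unfolding components_complete_def
proof (intro ballI impI)
  fix u v assume "connected_in G u v \<and> u \<noteq> v"
  moreover have "v = u \<or> adj G u v" if "(u, v) \<in> {(x, y). adj G x y}\<^sup>*"
    using that by (induction rule: rtrancl_induct) (use trans in auto)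
  ultimately show "adj G u v" unfolding connected_in_def by blast
qed

lemma components_complete_adj_common_neighbour:
  assumes "graph G" and "components_complete G"
    and "adj G u p" and "adj G u p'" and "p \<noteq> p'"
  shows "adj G p p'"
proof -
  have "(p, u) \<in> {(x, y). adj G x y}" "(u, p') \<in> {(x, y). adj G x y}"
    using assms(3,4) adj_commute by fastforce+
  then have "(p, p') \<in> {(x, y). adj G x y}\<^sup>*" by (meson r_into_rtrancl rtrancl_trans)
  then have "connected_in G p p'" unfolding connected_in_def by simp
  then show ?thesis
    using assms adj_imp_verts unfolding components_complete_def by metis
qed

subsection \<open>Orientations\<close>

lemma orientation_imp_adj: "orientation G D \<Longrightarrow> (x, y) \<in> D \<Longrightarrow> adj G x y"
  unfolding orientation_def by auto

lemma orientation_flip: "orientation G D \<Longrightarrow> adj G x y \<Longrightarrow> (x, y) \<in> D \<longleftrightarrow> (y, x) \<notin> D"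
  unfolding orientation_def by auto

lemma exists_orientation:
  assumes "graph G"
  shows "\<exists>D. orientation G D"
proof -
  obtain f :: "'a \<Rightarrow> nat" where f: "inj_on f (verts G)"
    using assms finite_imp_inj_to_nat_seg unfolding graph_def by metis
  have "orientation G {(x, y). adj G x y \<and> f x < f y}"
    unfolding orientation_def
  proof (intro conjI allI impI)
    fix u v assume uv: "adj G u v"
    then have "f u \<noteq> f v"
      using f adj_imp_verts[OF assms uv] by (metis adj_irrefl inj_on_def)
    then show "(u, v) \<in> {(x, y). adj G x y \<and> f x < f y} \<longleftrightarrow> (v, u) \<notin> {(x, y). adj G x y \<and> f x < f y}"
      using uv adj_commute[of G u v] by auto
  qed auto
  then show ?thesis by blast
qed

lemma one_perfect_orientationI:
  assumes "graph G" and "orientation G D"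
    and "\<And>x y z. (x, y) \<in> D \<Longrightarrow> (x, z) \<in> D \<Longrightarrow> y \<noteq> z \<Longrightarrow> adj G y z"
  shows "one_perfect_orientation G D"
proof -
  have "out_nbhd D x \<subseteq> verts G" for x
    using assms(1,2) orientation_imp_adj adj_imp_verts unfolding out_nbhd_def by fastforce
  then show ?thesis
    using assms(2,3) unfolding one_perfect_orientation_def clique_def out_nbhd_def by blast
qed

lemma one_perfect_orientation_adj:
  assumes "graph G" and "one_perfect_orientation G D"
    and "(x, y) \<in> D" and "(x, z) \<in> D" and "y \<noteq> z"
  shows "adj G y z"
proof -
  have "x \<in> verts G"
    using assms orientation_imp_adj adj_imp_verts unfolding one_perfect_orientation_def by metis
  then show ?thesis
    using assms unfolding one_perfect_orientation_def clique_def out_nbhd_def by blast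
qed

lemma one_perfectly_orientable_induced:
  assumes "graph H" and "graph K" and "one_perfectly_orientable K"
    and "inj_on f (verts H)" and "f ` verts H \<subseteq> verts K"
    and induced: "\<And>v w. v \<in> verts H \<Longrightarrow> w \<in> verts H \<Longrightarrow> adj K (f v) (f w) \<longleftrightarrow> adj H v w"
  shows "one_perfectly_orientable H"
proof -
  obtain D where D: "one_perfect_orientation K D"
    using assms(3) unfolding one_perfectly_orientable_def by blast
  then have oD: "orientation K D" by (simp add: one_perfect_orientation_def)
  define DH where "DH = {(v, w). v \<in> verts H \<and> w \<in> verts H \<and> (f v, f w) \<in> D}"
  have "orientation H DH"
    unfolding orientation_def DH_def
    using induced orientation_imp_adj[OF oD] orientation_flip[OF oD] adj_imp_verts[OF \<open>graph H\<close>]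
    by auto
  moreover have "adj H y z" if "(x, y) \<in> DH" "(x, z) \<in> DH" "y \<noteq> z" for x y z
  proof -
    have "y \<in> verts H" "z \<in> verts H" "f y \<noteq> f z"
      using that assms(4) unfolding DH_def inj_on_def by auto
    moreover have "adj K (f y) (f z)"
      using that \<open>f y \<noteq> f z\<close> one_perfect_orientation_adj[OF \<open>graph K\<close> D] unfolding DH_def by auto
    ultimately show ?thesis using induced by blast
  qed
  ultimately show ?thesis
    using one_perfect_orientationI[OF \<open>graph H\<close>] unfolding one_perfectly_orientable_def by blast
qed

lemma one_perfect_orientation_arc_from_non_adj:
  assumes "graph K" and "one_perfect_orientation K D"
    and "adj K s p" and "adj K t p" and "s \<noteq> t" and "\<not> adj K s t"
  shows "(s, p) \<in> D \<or> (t, p) \<in> D"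
proof (rule ccontr)
  have oD: "orientation K D" using assms(2) by (simp add: one_perfect_orientation_def)
  assume "\<not> ((s, p) \<in> D \<or> (t, p) \<in> D)"
  then have "(p, s) \<in> D" "(p, t) \<in> D"
    using orientation_flip[OF oD] assms(3,4) by blast+
  then show False
    using one_perfect_orientation_adj[OF assms(1,2)] assms(5,6) by blast
qed

subsection \<open>Orienting the lexicographic product\<close>

definition lex_orientation ::
    "'a graph \<Rightarrow> 'b graph \<Rightarrow> ('a \<times> 'a) set \<Rightarrow> ('b \<times> 'b) set \<Rightarrow> 'b set \<Rightarrow> (('a \<times> 'b) \<times> ('a \<times> 'b)) set"
  where "lex_orientation G H OG OH A =
    {((u, v), (u', v')). adj (lex_product G H) (u, v) (u', v') \<and>
       (if u = u' then (v, v') \<in> OH else ((u, u') \<in> OG \<longleftrightarrow> (v \<in> A \<longleftrightarrow> v' \<in> A)))}"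

lemma mem_lex_orientation:
  "((u, v), (p, q)) \<in> lex_orientation G H OG OH A \<longleftrightarrow>
     u \<in> verts G \<and> p \<in> verts G \<and> v \<in> verts H \<and> q \<in> verts H \<and>
     (if u = p then adj H v q \<and> (v, q) \<in> OH
      else adj G u p \<and> ((u, p) \<in> OG \<longleftrightarrow> (v \<in> A \<longleftrightarrow> q \<in> A)))"
  by (auto simp: lex_orientation_def adj_lex_product)

lemma orientation_lex_orientation:
  assumes oG: "orientation G OG" and oH: "orientation H OH"
  shows "orientation (lex_product G H) (lex_orientation G H OG OH A)"
  unfolding orientation_def
proof (intro conjI allI impI)
  show "\<forall>(x, y)\<in>lex_orientation G H OG OH A. adj (lex_product G H) x y"
    by (auto simp: lex_orientation_def)
next
  fix x y :: "'a \<times> 'b"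
  assume xy: "adj (lex_product G H) x y"
  obtain u v u' v' where x: "x = (u, v)" and y: "y = (u', v')" by fastforce
  have yx: "adj (lex_product G H) y x" using xy adj_commute by metis
  show "(x, y) \<in> lex_orientation G H OG OH A \<longleftrightarrow> (y, x) \<notin> lex_orientation G H OG OH A"
  proof (cases "u = u'")
    case True
    then have "adj H v v'" using xy x y by (simp add: adj_lex_product)
    then show ?thesis
      using True xy yx x y orientation_flip[OF oH] by (simp add: lex_orientation_def)
  next
    case False
    then have "adj G u u'" using xy x y by (simp add: adj_lex_product)
    then show ?thesis
      using False xy yx x y orientation_flip[OF oG] by (auto simp: lex_orientation_def)
  qed
qed

lemma one_perfectly_orientable_lex_product_edgeless:
  assumes gG: "graph G" and gH: "graph H"
    and "edgeless G" and "one_perfectly_orientable H"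
  shows "one_perfectly_orientable (lex_product G H)"
proof -
  obtain OH where OH: "one_perfect_orientation H OH"
    using assms(4) unfolding one_perfectly_orientable_def by blast
  have no_adj: "\<not> adj G u u'" for u u'
    using \<open>edgeless G\<close> edgeless_iff_no_adj[OF gG] by blast
  then have "orientation G {}" unfolding orientation_def by simp
  moreover have "orientation H OH" using OH by (simp add: one_perfect_orientation_def)
  ultimately have oD: "orientation (lex_product G H) (lex_orientation G H {} OH {})"
    by (rule orientation_lex_orientation)
  have "adj (lex_product G H) y z"
    if "(x, y) \<in> lex_orientation G H {} OH {}" "(x, z) \<in> lex_orientation G H {} OH {}" "y \<noteq> z"
    for x y z
  proof -
    obtain u v p q p' q' where x: "x = (u, v)" and y: "y = (p, q)" and z: "z = (p', q')"
      by (cases x; cases y; cases z)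
    then have "p = u" "p' = u" "(v, q) \<in> OH" "(v, q') \<in> OH" "u \<in> verts G"
      using that no_adj by (auto simp: mem_lex_orientation split: if_splits)
    moreover from this have "adj H q q'"
      using one_perfect_orientation_adj[OF gH OH] \<open>y \<noteq> z\<close> y z by auto
    ultimately show ?thesis
      using y z adj_imp_verts[OF gH] by (simp add: adj_lex_product)
  qed
  then show ?thesis
    using one_perfect_orientationI[OF graph_lex_product[OF gG gH] oD]
    unfolding one_perfectly_orientable_def by blast
qed

lemma one_perfectly_orientable_lex_product_complete:
  assumes gG: "graph G" and gH: "graph H"
    and "one_perfectly_orientable G" and "complete H"
  shows "one_perfectly_orientable (lex_product G H)"
proof -
  obtain OG where OG: "one_perfect_orientation G OG"
    using assms(3) unfolding one_perfectly_orientable_def by blast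
  then have oG: "orientation G OG" by (simp add: one_perfect_orientation_def)
  obtain OH where "orientation H OH" using exists_orientation[OF gH] by blast
  then have oD: "orientation (lex_product G H) (lex_orientation G H OG OH {})"
    using oG orientation_lex_orientation by blast
  have "adj (lex_product G H) y z"
    if "(x, y) \<in> lex_orientation G H OG OH {}" "(x, z) \<in> lex_orientation G H OG OH {}" "y \<noteq> z"
    for x y z
  proof -
    obtain u v p q p' q' where x: "x = (u, v)" and y: "y = (p, q)" and z: "z = (p', q')"
      by (cases x; cases y; cases z)
    have arcs: "p = u \<or> (u, p) \<in> OG" "p' = u \<or> (u, p') \<in> OG"
      and verts: "p \<in> verts G" "p' \<in> verts G" "q \<in> verts H" "q' \<in> verts H"
      using that x y z by (auto simp: mem_lex_orientation split: if_splits)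
    have "adj G p p' \<or> (p = p' \<and> adj H q q')"
    proof (cases "p = p'")
      case True
      then have "q \<noteq> q'" using \<open>y \<noteq> z\<close> y z by simp
      then show ?thesis
        using True verts \<open>complete H\<close> unfolding complete_def clique_def by blast
    next
      case False
      then show ?thesis
        using arcs orientation_imp_adj[OF oG] one_perfect_orientation_adj[OF gG OG] adj_commute
        by metis
    qed
    then show ?thesis using verts y z by (simp add: adj_lex_product)
  qed
  then show ?thesis
    using one_perfect_orientationI[OF graph_lex_product[OF gG gH] oD]
    unfolding one_perfectly_orientable_def by blast
qed

lemma lex_orientation_out_nbhd_adj:
  assumes gG: "graph G" and gH: "graph H" and "components_complete G"
    and OH: "one_perfect_orientation H OH"
    and A: "\<And>w w'. w \<in> verts H \<Longrightarrow> w' \<in> verts H \<Longrightarrow> w \<noteq> w' \<Longrightarrow> (w \<in> A \<longleftrightarrow> w' \<in> A) \<Longrightarrow> adj H w w'"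
    and arcs: "((u, v), (p, q)) \<in> lex_orientation G H OG OH A"
      "((u, v), (p', q')) \<in> lex_orientation G H OG OH A"
    and "(p, q) \<noteq> (p', q')"
  shows "adj (lex_product G H) (p, q) (p', q')"
proof -
  have arc_y: "if u = p then (v, q) \<in> OH else adj G u p \<and> ((u, p) \<in> OG \<longleftrightarrow> (v \<in> A \<longleftrightarrow> q \<in> A))"
    and arc_z: "if u = p' then (v, q') \<in> OH else adj G u p' \<and> ((u, p') \<in> OG \<longleftrightarrow> (v \<in> A \<longleftrightarrow> q' \<in> A))"
    and verts: "p \<in> verts G" "p' \<in> verts G" "q \<in> verts H" "q' \<in> verts H"
    using arcs unfolding mem_lex_orientation by (simp_all split: if_splits)
  have "adj G p p' \<or> (p = p' \<and> adj H q q')"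
  proof (cases "p = p'")
    case True
    then have "q \<noteq> q'" using \<open>(p, q) \<noteq> (p', q')\<close> by simp
    show ?thesis
    proof (cases "p = u")
      case True
      then show ?thesis
        using \<open>p = p'\<close> \<open>q \<noteq> q'\<close> arc_y arc_z one_perfect_orientation_adj[OF gH OH] by auto
    next
      case False
      then have "q \<in> A \<longleftrightarrow> q' \<in> A" using \<open>p = p'\<close> arc_y arc_z by auto
      then show ?thesis using \<open>p = p'\<close> \<open>q \<noteq> q'\<close> A verts(3,4) by blast
    qed
  next
    case False
    consider "p = u" | "p' = u" | "p \<noteq> u" "p' \<noteq> u" by blast
    then show ?thesis
    proof cases
      case 1
      then show ?thesis using False arc_z by simp
    next
      case 2
      then show ?thesis using False arc_y adj_commute by (metis (full_types))
    next
      case 3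
      then show ?thesis
        using False arc_y arc_z components_complete_adj_common_neighbour[OF gG \<open>components_complete G\<close>]
        by auto
    qed
  qed
  then show ?thesis using verts by (simp add: adj_lex_product)
qed

lemma one_perfectly_orientable_lex_product_co_bipartite:
  assumes gG: "graph G" and gH: "graph H" and "components_complete G"
    and "co_bipartite H" and "one_perfectly_orientable H"
  shows "one_perfectly_orientable (lex_product G H)"
proof -
  obtain OH where OH: "one_perfect_orientation H OH"
    using assms(5) unfolding one_perfectly_orientable_def by blast
  obtain OG where oG: "orientation G OG" using exists_orientation[OF gG] by blast
  obtain A where "\<forall>w\<in>verts H. \<forall>w'\<in>verts H. w \<noteq> w' \<and> (w \<in> A \<longleftrightarrow> w' \<in> A) \<longrightarrow> adj H w w'"
    using \<open>co_bipartite H\<close> unfolding co_bipartite_iff ..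
  note A = this[rule_format]
  let ?D = "lex_orientation G H OG OH A"
  have "orientation H OH" using OH by (simp add: one_perfect_orientation_def)
  with oG have oD: "orientation (lex_product G H) ?D" by (rule orientation_lex_orientation)
  have "adj (lex_product G H) y z" if "(x, y) \<in> ?D" "(x, z) \<in> ?D" "y \<noteq> z" for x y z
    using that lex_orientation_out_nbhd_adj[OF gG gH \<open>components_complete G\<close> OH, of A]
    by (cases x; cases y; cases z) (simp add: A)
  then show ?thesis
    using one_perfect_orientationI[OF graph_lex_product[OF gG gH] oD]
    unfolding one_perfectly_orientable_def by blast
qed

subsection \<open>Consequences of a 1-perfect orientation of the product\<close>

lemma one_perfectly_orientable_lex_product_left:
  assumes "graph G" and "graph H" and "one_perfectly_orientable (lex_product G H)"
    and "v \<in> verts H"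
  shows "one_perfectly_orientable G"
proof (rule one_perfectly_orientable_induced[where f = "\<lambda>u. (u, v)"])
  show "graph (lex_product G H)" using assms(1,2) by (rule graph_lex_product)
  show "adj (lex_product G H) (u, v) (w, v) \<longleftrightarrow> adj G u w"
    if "u \<in> verts G" "w \<in> verts G" for u w
    using that assms(4) by (simp add: adj_lex_product)
qed (use assms in \<open>auto simp: inj_on_def\<close>)

lemma one_perfectly_orientable_lex_product_right:
  assumes "graph G" and "graph H" and "one_perfectly_orientable (lex_product G H)"
    and "u \<in> verts G"
  shows "one_perfectly_orientable H"
proof (rule one_perfectly_orientable_induced[where f = "\<lambda>v. (u, v)"])
  show "graph (lex_product G H)" using assms(1,2) by (rule graph_lex_product)
  show "adj (lex_product G H) (u, v) (u, w) \<longleftrightarrow> adj H v w"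
    if "v \<in> verts H" "w \<in> verts H" for v w
    using that assms(4) by (simp add: adj_lex_product)
qed (use assms in \<open>auto simp: inj_on_def\<close>)

lemma co_bipartite_if_one_perfectly_orientable_lex_product:
  assumes gG: "graph G" and gH: "graph H" and "one_perfectly_orientable (lex_product G H)"
    and "adj G u u'" and ab: "a \<in> verts H" "b \<in> verts H" "a \<noteq> b" "\<not> adj H a b"
  shows "co_bipartite H"
proof -
  obtain D where D: "one_perfect_orientation (lex_product G H) D"
    using assms(3) unfolding one_perfectly_orientable_def by blast
  have gL: "graph (lex_product G H)" using gG gH by (rule graph_lex_product)
  have u: "u \<in> verts G" "u' \<in> verts G" using adj_imp_verts[OF gG \<open>adj G u u'\<close>] by auto
  have cover: "((u, a), (u', w)) \<in> D \<or> ((u, b), (u', w)) \<in> D" if "w \<in> verts H" for w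
    using one_perfect_orientation_arc_from_non_adj[OF gL D, of "(u, a)" "(u', w)" "(u, b)"]
      that ab u \<open>adj G u u'\<close> by (simp add: adj_lex_product)
  define A where "A = {w. ((u, a), (u', w)) \<in> D}"
  have "adj H w w'"
    if "w \<in> verts H" "w' \<in> verts H" "w \<noteq> w'" "w \<in> A \<longleftrightarrow> w' \<in> A" for w w'
  proof -
    have "\<exists>c. ((u, c), (u', w)) \<in> D \<and> ((u, c), (u', w')) \<in> D"
      using that cover[of w] cover[of w'] unfolding A_def by auto
    then have "adj (lex_product G H) (u', w) (u', w')"
      using one_perfect_orientation_adj[OF gL D] \<open>w \<noteq> w'\<close> by blast
    then show ?thesis by (simp add: adj_lex_product)
  qed
  then show ?thesis unfolding co_bipartite_iff by blast
qed

lemma adj_trans_if_one_perfectly_orientable_lex_product: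
  assumes gG: "graph G" and gH: "graph H" and "one_perfectly_orientable (lex_product G H)"
    and ab: "a \<in> verts H" "b \<in> verts H" "a \<noteq> b" "\<not> adj H a b"
    and "adj G x y" and "adj G y z" and "x \<noteq> z"
  shows "adj G x z"
proof (rule ccontr)
  assume "\<not> adj G x z"
  obtain D where D: "one_perfect_orientation (lex_product G H) D"
    using assms(3) unfolding one_perfectly_orientable_def by blast
  have gL: "graph (lex_product G H)" using gG gH by (rule graph_lex_product)
  have y: "y \<in> verts G" using adj_imp_verts[OF gG \<open>adj G y z\<close>] by simp
  have cover: "((y, a), (p, q)) \<in> D \<or> ((y, b), (p, q)) \<in> D" if "adj G y p" "q \<in> verts H" for p q
    using one_perfect_orientation_arc_from_non_adj[OF gL D, of "(y, a)" "(p, q)" "(y, b)"]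
      that ab y adj_imp_verts[OF gG \<open>adj G y p\<close>] by (simp add: adj_lex_product)
  have "adj G y x" using \<open>adj G x y\<close> adj_commute by metis
  then have arcs: "((y, a), (x, a)) \<in> D \<or> ((y, b), (x, a)) \<in> D"
      "((y, a), (x, b)) \<in> D \<or> ((y, b), (x, b)) \<in> D"
      "((y, a), (z, a)) \<in> D \<or> ((y, b), (z, a)) \<in> D"
    using cover \<open>adj G y z\<close> ab by blast+
  have no_common_tail: False
    if "(t, s) \<in> D" "(t, s') \<in> D" "s \<noteq> s'" "\<not> adj (lex_product G H) s s'" for t s s'
    using that one_perfect_orientation_adj[OF gL D] by blast
  have "(x, a) \<noteq> (x, b)" "(x, a) \<noteq> (z, a)" "(x, b) \<noteq> (z, a)"
    using ab(3) \<open>x \<noteq> z\<close> by simp_all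
  moreover have "\<not> adj (lex_product G H) (x, a) (x, b)" "\<not> adj (lex_product G H) (x, a) (z, a)"
      "\<not> adj (lex_product G H) (x, b) (z, a)"
    using ab(4) \<open>x \<noteq> z\<close> \<open>\<not> adj G x z\<close> by (simp_all add: adj_lex_product)
  ultimately show False
    using arcs no_common_tail[of "(y, a)"] no_common_tail[of "(y, b)"] by metis
qed

lemma components_complete_co_bipartite_if_one_perfectly_orientable_lex_product:
  assumes "graph G" and "graph H" and L: "one_perfectly_orientable (lex_product G H)"
    and "\<not> edgeless G" and "\<not> complete H"
  shows "components_complete G \<and> co_bipartite H"
proof -
  obtain u u' where "adj G u u'" using \<open>\<not> edgeless G\<close> edgeless_iff_no_adj[OF assms(1)] by blast
  obtain a b where ab: "a \<in> verts H" "b \<in> verts H" "a \<noteq> b" "\<not> adj H a b"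
    using \<open>\<not> complete H\<close> unfolding complete_def clique_def by blast
  show ?thesis
    using co_bipartite_if_one_perfectly_orientable_lex_product[OF assms(1,2) L \<open>adj G u u'\<close> ab]
      components_complete_if_adj_trans
      adj_trans_if_one_perfectly_orientable_lex_product[OF assms(1,2) L ab] by blast
qed

theorem theorem8:
  fixes G :: "'a graph" and H :: "'b graph"
  assumes "graph G" and "graph H"
    and "card (verts G) \<ge> 2" and "card (verts H) \<ge> 2"
  shows "one_perfectly_orientable (lex_product G H) \<longleftrightarrow>
           (edgeless G \<and> one_perfectly_orientable H) \<or>
           (one_perfectly_orientable G \<and> complete H) \<or>
           (components_complete G \<and> co_bipartite H \<and> one_perfectly_orientable H)"
proof
  assume L: "one_perfectly_orientable (lex_product G H)"
  obtain u v where "u \<in> verts G" "v \<in> verts H"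
    using assms(3,4) by (metis all_not_in_conv card.empty not_numeral_le_zero)
  then show "(edgeless G \<and> one_perfectly_orientable H) \<or>
           (one_perfectly_orientable G \<and> complete H) \<or>
           (components_complete G \<and> co_bipartite H \<and> one_perfectly_orientable H)"
    using one_perfectly_orientable_lex_product_left[OF assms(1,2) L]
      one_perfectly_orientable_lex_product_right[OF assms(1,2) L]
      components_complete_co_bipartite_if_one_perfectly_orientable_lex_product[OF assms(1,2) L]
    by blast
next
  assume "(edgeless G \<and> one_perfectly_orientable H) \<or>
           (one_perfectly_orientable G \<and> complete H) \<or>
           (components_complete G \<and> co_bipartite H \<and> one_perfectly_orientable H)"
  then show "one_perfectly_orientable (lex_product G H)"
    using one_perfectly_orientable_lex_product_edgeless[OF assms(1,2)]
      one_perfectly_orientable_lex_product_complete[OF assms(1,2)]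
      one_perfectly_orientable_lex_product_co_bipartite[OF assms(1,2)] by blast
qed

end
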